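(* Let $\mathcal{A}$ be a finite totally ordered alphabet of size $n$. The monoid $\mathbf{Sylv}(\mathcal{A},2)$ contains exactly $\sum_{k=0}^n\binom{n}{k}S_k$ idempotents, where $(S_k)_{k\ge0}$ are the large Schröder numbers shifted by one: $S_0=S_1=1$, $S_2=2$, $S_3=6$, $S_4=22$, $\dots$ (i.e. $S_k$ is the $(k-1)$-th large Schröder number for $k\geq1$). Moreover, the idempotents are exactly the elements represented by the readings $\operatorname{R}(T)$ of the 2-reduced binary search trees $T$ such that, for every label $x$ occurring in $T$, the deepest node labelled $x$ in $T$ has no left subtree.
   Context: The sylvester monoid $\mathbf{Sylv}(\mathcal{A})$ is the quotient of the free monoid $\mathcal{A}^*$ by the relations $acWb=caWb$ for all $a,b,c\in\mathcal{A}$ with $a\le b<c$ and all $W\in\mathcal{A}^*$; $\mathbf{Sylv}(\mathcal{A},2)$ is its quotient by the additional relations $a^2=a$, $a\in\mathcal{A}$. A binary search tree $T=(L,r,R)$ is a binary tree with nodes labelled by $\mathcal{A}$ such that the label of each node is greater than or equal to all labels in its left subtree and strictly smaller than all labels in its right subtree. Its reading $\operatorname{R}(T)$ is the right-to-left postfix reading: $\operatorname{R}(\emptyset)$ is the empty word and $\operatorname{R}((L,r,R))=\operatorname{R}(R)\,\operatorname{R}(L)\,r$. A binary search tree is 2-reduced if no node has a left child carrying the same label as itself. *)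

theory Defs
  imports Main "HOL-Library.Tree"
begin

inductive sylv2_rel :: "'a::linorder list \<Rightarrow> 'a list \<Rightarrow> bool" where
  sylv: "a \<le> b \<Longrightarrow> b < c \<Longrightarrow> sylv2_rel ([a, c] @ W @ [b]) ([c, a] @ W @ [b])"
| idem: "sylv2_rel [a, a] [a]"

inductive sylv2_cong :: "'a::linorder list \<Rightarrow> 'a list \<Rightarrow> bool" where
  gen: "sylv2_rel x y \<Longrightarrow> sylv2_cong (u @ x @ v) (u @ y @ v)"
| refl: "sylv2_cong w w"
| sym: "sylv2_cong w v \<Longrightarrow> sylv2_cong v w"
| trans: "sylv2_cong u v \<Longrightarrow> sylv2_cong v w \<Longrightarrow> sylv2_cong u w"

definition sylv2_class :: "'a::linorder list \<Rightarrow> 'a list set" where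
  "sylv2_class w = {v. sylv2_cong w v}"

definition sylv2_idempotents :: "'a::linorder list set set" where
  "sylv2_idempotents = {sylv2_class w | w. sylv2_cong (w @ w) w}"

fun is_bst :: "'a::linorder tree \<Rightarrow> bool" where
  "is_bst Leaf = True"
| "is_bst (Node l a r) = (is_bst l \<and> is_bst r \<and> (\<forall>x\<in>set_tree l. x \<le> a) \<and> (\<forall>x\<in>set_tree r. a < x))"

fun reading :: "'a tree \<Rightarrow> 'a list" where
  "reading Leaf = []"
| "reading (Node l a r) = reading r @ reading l @ [a]"

fun two_reduced :: "'a tree \<Rightarrow> bool" where
  "two_reduced Leaf = True"
| "two_reduced (Node l a r) = (two_reduced l \<and> two_reduced r \<and> (case l of Leaf \<Rightarrow> True | Node _ b _ \<Rightarrow> b \<noteq> a))"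

fun nodes_d :: "nat \<Rightarrow> 'a tree \<Rightarrow> (nat \<times> 'a \<times> 'a tree) set" where
  "nodes_d d Leaf = {}"
| "nodes_d d (Node l a r) = insert (d, a, l) (nodes_d (Suc d) l \<union> nodes_d (Suc d) r)"

definition deepest_no_left :: "'a tree \<Rightarrow> bool" where
  "deepest_no_left T = (\<forall>x\<in>set_tree T. \<forall>d l.
      (d, x, l) \<in> nodes_d 0 T \<and> d = Max {d'. \<exists>l'. (d', x, l') \<in> nodes_d 0 T} \<longrightarrow> l = Leaf)"

definition catalan :: "nat \<Rightarrow> nat" where
  "catalan k = ((2 * k) choose k) div (k + 1)"

definition large_schroeder :: "nat \<Rightarrow> nat" where
  "large_schroeder m = (\<Sum>k=0..m. ((m + k) choose (2 * k)) * catalan k)"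

definition shifted_schroeder :: "nat \<Rightarrow> nat" where
  "shifted_schroeder k = (if k = 0 then 1 else large_schroeder (k - 1))"

end

(*
  Insert the letters of a word w from right to left into a binary search tree, absorbing a
  letter that equals the label of a node without left child.  Both kinds of defining relations
  leave the resulting tree NF(w) unchanged and R(NF(w)) is congruent to w, so NF is a complete
  invariant of Sylv(A,2), inverted by R on 2-reduced binary search trees.  Hence w is idempotent
  iff inserting the letters of w into NF(w) changes nothing, i.e. iff every label of NF(w) is
  absorbed, and for a binary search tree this is the condition on the deepest nodes.

  These idempotent trees are built recursively from a root x, an idempotent right subtree on the
  labels above x, and a left subtree on the labels up to x.  On a label set with maximum m, the
  idempotent trees rooted at m are the trees Node l m Leaf with l one of the admissible left
  subtrees, and the others are exactly these left subtrees; so for k >= 2 labels the left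
  subtrees make up half of the idempotent trees.  The root decomposition then yields the
  Schroeder recurrence S(k) = S(k-1) + sum_{i=1}^{k-1} S(i) S(k-i), which the closed formula for
  S satisfies by Segner's recurrence for the Catalan numbers and a Chu-Vandermonde convolution.
*)
theory Submission
  imports Defs "HOL-Computational_Algebra.Formal_Power_Series"
begin

lemma sylv2_cong_context: "sylv2_cong x y \<Longrightarrow> sylv2_cong (u @ x @ v) (u @ y @ v)"
proof (induction arbitrary: u v rule: sylv2_cong.induct)
  case (gen x y u' v')
  then show ?case using sylv2_cong.gen[of x y "u @ u'" "v' @ v"] by simp
qed (blast intro: sylv2_cong.intros)+

lemma sylv2_cong_append_left: "sylv2_cong x y \<Longrightarrow> sylv2_cong (u @ x) (u @ y)"
  using sylv2_cong_context[of x y u "[]"] by simp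

lemma sylv2_cong_append_right: "sylv2_cong x y \<Longrightarrow> sylv2_cong (x @ v) (y @ v)"
  using sylv2_cong_context[of x y "[]" v] by simp

lemma sylv2_cong_move_past_greater:
  assumes "\<forall>c\<in>set s. b < c" and "a \<le> b"
  shows "sylv2_cong (a # s @ W @ [b]) (s @ a # W @ [b])"
  using assms(1)
proof (induction s)
  case Nil
  then show ?case by (simp add: sylv2_cong.refl)
next
  case (Cons c s)
  have "sylv2_rel ([a, c] @ (s @ W) @ [b]) ([c, a] @ (s @ W) @ [b])"
    using assms(2) Cons.prems by (intro sylv2_rel.sylv) auto
  then have "sylv2_cong (a # c # s @ W @ [b]) (c # a # s @ W @ [b])"
    using sylv2_cong.gen[where u = "[]" and v = "[]"] by fastforce
  moreover have "sylv2_cong ([c] @ a # s @ W @ [b]) ([c] @ s @ a # W @ [b])"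
    using Cons by (intro sylv2_cong_append_left) simp
  ultimately show ?case by (auto intro: sylv2_cong.trans)
qed

section \<open>Normal forms\<close>

text \<open>The clause \<open>a = x \<and> l = Leaf\<close> realises the relation \<open>a a = a\<close>.\<close>

fun sylv2_ins :: "'a::linorder \<Rightarrow> 'a tree \<Rightarrow> 'a tree" where
  "sylv2_ins a Leaf = Node Leaf a Leaf"
| "sylv2_ins a (Node l x r) =
    (if a \<le> x then (if a = x \<and> l = Leaf then Node l x r else Node (sylv2_ins a l) x r)
     else Node l x (sylv2_ins a r))"

definition sylv2_nf :: "'a::linorder list \<Rightarrow> 'a tree" where
  "sylv2_nf w = foldr sylv2_ins w Leaf"

lemma sylv2_ins_neq_Leaf [simp]: "sylv2_ins a t \<noteq> Leaf"
  by (cases t) auto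

lemma set_tree_sylv2_ins [simp]: "set_tree (sylv2_ins a t) = insert a (set_tree t)"
  by (induction t) auto

lemma set_tree_foldr_sylv2_ins [simp]: "set_tree (foldr sylv2_ins s t) = set s \<union> set_tree t"
  by (induction s) auto

lemma set_tree_sylv2_nf [simp]: "set_tree (sylv2_nf w) = set w"
  by (simp add: sylv2_nf_def)

lemma is_bst_sylv2_ins: "is_bst t \<Longrightarrow> is_bst (sylv2_ins a t)"
  by (induction t) auto

lemma is_bst_foldr_sylv2_ins: "is_bst t \<Longrightarrow> is_bst (foldr sylv2_ins s t)"
  by (induction s) (auto simp: is_bst_sylv2_ins)

lemma is_bst_sylv2_nf: "is_bst (sylv2_nf w)"
  by (simp add: sylv2_nf_def is_bst_foldr_sylv2_ins)

lemma two_reduced_sylv2_ins: "two_reduced t \<Longrightarrow> two_reduced (sylv2_ins a t)"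
proof (induction t)
  case (Node l x r)
  then show ?case by (cases l) (auto split: tree.splits)
qed simp

lemma two_reduced_sylv2_nf: "two_reduced (sylv2_nf w)"
  by (induction w) (auto simp: sylv2_nf_def two_reduced_sylv2_ins)

lemma sylv2_ins_idem: "sylv2_ins a (sylv2_ins a t) = sylv2_ins a t"
  by (induction t) auto

lemma sylv2_ins_commute:
  assumes "is_bst t" and "b \<in> set_tree t" and "a \<le> b" and "b < c"
  shows "sylv2_ins a (sylv2_ins c t) = sylv2_ins c (sylv2_ins a t)"
  using assms
proof (induction t)
  case (Node l x r)
  consider "a \<le> x" "x < c" | "x < a" | "c \<le> x" by fastforce
  then show ?case
  proof cases
    case 2
    then have "b \<in> set_tree r" using Node.prems by auto
    then show ?thesis using Node 2 by auto
  next
    case 3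
    then have "b \<in> set_tree l" using Node.prems by auto
    then show ?thesis using Node 3 by auto
  qed auto
qed simp

text \<open>Both kinds of defining relations act trivially on normal forms, because the last
  letter \<open>b\<close> of a sylvester relation is inserted first and separates \<open>a\<close> from \<open>c\<close>.\<close>

lemma foldr_sylv2_ins_sylv2_rel:
  "sylv2_rel x y \<Longrightarrow> is_bst t \<Longrightarrow> foldr sylv2_ins x t = foldr sylv2_ins y t"
proof (induction rule: sylv2_rel.induct)
  case (sylv a b c W)
  let ?t = "foldr sylv2_ins W (sylv2_ins b t)"
  have "is_bst ?t" using sylv by (simp add: is_bst_foldr_sylv2_ins is_bst_sylv2_ins)
  then show ?case using sylv2_ins_commute[of ?t b a c] sylv by simp
qed (simp add: sylv2_ins_idem)

lemma sylv2_nf_cong: "sylv2_cong w v \<Longrightarrow> sylv2_nf w = sylv2_nf v"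
proof (induction rule: sylv2_cong.induct)
  case (gen x y u v)
  then show ?case by (simp add: sylv2_nf_def foldr_sylv2_ins_sylv2_rel is_bst_foldr_sylv2_ins)
qed auto

lemma set_reading [simp]: "set (reading t) = set_tree t"
  by (induction t) auto

lemma sylv2_cong_reading_sylv2_ins:
  "is_bst t \<Longrightarrow> sylv2_cong (a # reading t) (reading (sylv2_ins a t))"
proof (induction t arbitrary: a)
  case Leaf
  then show ?case by (simp add: sylv2_cong.refl)
next
  case (Node l x r)
  show ?case
  proof (cases "a \<le> x")
    case True
    have move: "sylv2_cong (a # reading r @ reading l @ [x]) (reading r @ a # reading l @ [x])"
      using sylv2_cong_move_past_greater[of "reading r" x a "reading l"] Node.prems True by auto
    show ?thesis
    proof (cases "a = x \<and> l = Leaf")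
      case True
      then have "sylv2_cong (reading r @ [x, x] @ []) (reading r @ [x] @ [])"
        using sylv2_cong.gen[OF sylv2_rel.idem] by blast
      then show ?thesis using move True by (auto intro: sylv2_cong.trans)
    next
      case False
      have "sylv2_cong (reading r @ (a # reading l) @ [x]) (reading r @ reading (sylv2_ins a l) @ [x])"
        using Node by (intro sylv2_cong_context) auto
      then show ?thesis using move False \<open>a \<le> x\<close> by (auto intro: sylv2_cong.trans)
    qed
  next
    case False
    have "sylv2_cong ((a # reading r) @ reading l @ [x]) (reading (sylv2_ins a r) @ reading l @ [x])"
      using Node by (intro sylv2_cong_append_right) auto
    then show ?thesis using False by auto
  qed
qed

lemma sylv2_cong_reading_sylv2_nf: "sylv2_cong w (reading (sylv2_nf w))"
proof (induction w)
  case Nil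
  then show ?case by (simp add: sylv2_nf_def sylv2_cong.refl)
next
  case (Cons a w)
  have "sylv2_cong ([a] @ w) ([a] @ reading (sylv2_nf w))"
    using Cons by (rule sylv2_cong_append_left)
  moreover have "sylv2_cong (a # reading (sylv2_nf w)) (reading (sylv2_ins a (sylv2_nf w)))"
    by (rule sylv2_cong_reading_sylv2_ins[OF is_bst_sylv2_nf])
  ultimately show ?case by (auto simp: sylv2_nf_def intro: sylv2_cong.trans)
qed

lemma sylv2_cong_iff_nf: "sylv2_cong w v \<longleftrightarrow> sylv2_nf w = sylv2_nf v"
  by (metis sylv2_nf_cong sylv2_cong_reading_sylv2_nf sylv2_cong.sym sylv2_cong.trans)

lemma foldr_sylv2_ins_right:
  "\<forall>c\<in>set s. x < c \<Longrightarrow> foldr sylv2_ins s (Node l x r) = Node l x (foldr sylv2_ins s r)"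
  by (induction s) auto

lemma foldr_sylv2_ins_neq_Leaf: "t \<noteq> Leaf \<Longrightarrow> foldr sylv2_ins s t \<noteq> Leaf"
  by (cases s) auto

lemma foldr_sylv2_ins_left:
  "\<forall>c\<in>set s. c \<le> x \<Longrightarrow> l \<noteq> Leaf \<Longrightarrow>
    foldr sylv2_ins s (Node l x r) = Node (foldr sylv2_ins s l) x r"
  by (induction s) (auto simp: foldr_sylv2_ins_neq_Leaf)

lemma sylv2_nf_reading: "is_bst t \<Longrightarrow> two_reduced t \<Longrightarrow> sylv2_nf (reading t) = t"
proof (induction t)
  case Leaf
  then show ?case by (simp add: sylv2_nf_def)
next
  case (Node l x r)
  have left: "foldr sylv2_ins (reading l) (Node Leaf x Leaf) = Node l x Leaf"
  proof (cases l)
    case (Node ll y lr)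
    then have "y \<le> x" "y \<noteq> x" using Node.prems by auto
    then have "foldr sylv2_ins (reading l) (Node Leaf x Leaf)
        = foldr sylv2_ins (reading lr @ reading ll) (Node (Node Leaf y Leaf) x Leaf)"
      using Node by simp
    also have "\<dots> = Node (foldr sylv2_ins (reading lr @ reading ll) (Node Leaf y Leaf)) x Leaf"
      using Node.prems \<open>l = _\<close> by (intro foldr_sylv2_ins_left) auto
    also have "foldr sylv2_ins (reading lr @ reading ll) (Node Leaf y Leaf) = sylv2_nf (reading l)"
      using \<open>l = _\<close> by (simp add: sylv2_nf_def)
    finally show ?thesis using Node.IH(1) Node.prems by auto
  qed simp
  have "sylv2_nf (reading (Node l x r))
      = foldr sylv2_ins (reading r) (foldr sylv2_ins (reading l) (Node Leaf x Leaf))"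
    by (simp add: sylv2_nf_def)
  also have "\<dots> = Node l x (sylv2_nf (reading r))"
    using left Node.prems by (simp add: foldr_sylv2_ins_right sylv2_nf_def)
  finally show ?case using Node by auto
qed

section \<open>Idempotents\<close>

definition absorbing :: "'a::linorder tree \<Rightarrow> bool" where
  "absorbing t \<longleftrightarrow> (\<forall>c\<in>set_tree t. sylv2_ins c t = t)"

lemma size_sylv2_ins: "size (sylv2_ins c t) = (if sylv2_ins c t = t then size t else Suc (size t))"
  by (induction t) auto

text \<open>Insertion never shrinks a tree, so a sequence of insertions leaves \<open>t\<close> fixed only if
  each single one does.\<close>

lemma foldr_sylv2_ins_eq_self_iff:
  "foldr sylv2_ins s t = t \<longleftrightarrow> (\<forall>c\<in>set s. sylv2_ins c t = t)"
proof
  have "size (foldr sylv2_ins s t) \<le> size t \<Longrightarrow>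
    foldr sylv2_ins s t = t \<and> (\<forall>c\<in>set s. sylv2_ins c t = t)"
  proof (induction s)
    case (Cons c s)
    let ?t = "foldr sylv2_ins s t"
    have "size ?t \<le> size t"
      using Cons.prems size_sylv2_ins[of c ?t] by (auto split: if_splits)
    with Cons.IH have "?t = t" and "\<forall>c\<in>set s. sylv2_ins c t = t" by auto
    moreover have "sylv2_ins c t = t"
      using Cons.prems \<open>?t = t\<close> size_sylv2_ins[of c t] by (auto split: if_splits)
    ultimately show ?case by simp
  qed simp
  then show "foldr sylv2_ins s t = t \<Longrightarrow> \<forall>c\<in>set s. sylv2_ins c t = t" by simp
qed (induction s; simp)

lemma sylv2_idempotent_iff_absorbing: "sylv2_cong (w @ w) w \<longleftrightarrow> absorbing (sylv2_nf w)"
proof -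
  have "sylv2_cong (w @ w) w \<longleftrightarrow> foldr sylv2_ins w (sylv2_nf w) = sylv2_nf w"
    by (simp add: sylv2_cong_iff_nf sylv2_nf_def)
  also have "\<dots> \<longleftrightarrow> absorbing (sylv2_nf w)"
    by (simp add: foldr_sylv2_ins_eq_self_iff absorbing_def)
  finally show ?thesis .
qed

lemma sylv2_ins_notin: "c \<notin> set_tree t \<Longrightarrow> sylv2_ins c t \<noteq> t"
  by (metis insertI1 set_tree_sylv2_ins)

lemma absorbing_Node:
  assumes "is_bst (Node l x r)"
  shows "absorbing (Node l x r) \<longleftrightarrow> absorbing l \<and> absorbing r \<and> (l = Leaf \<or> x \<in> set_tree l)"
proof -
  let ?t = "Node l x r"
  have left: "sylv2_ins c ?t = ?t \<longleftrightarrow> sylv2_ins c l = l" if "c \<in> set_tree l" for c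
    using that assms by auto
  have right: "sylv2_ins c ?t = ?t \<longleftrightarrow> sylv2_ins c r = r" if "c \<in> set_tree r" for c
    using that assms by auto
  have root: "sylv2_ins x ?t = ?t \<longleftrightarrow> l = Leaf" if "x \<notin> set_tree l"
    using that sylv2_ins_notin[of x l] by auto
  have "absorbing ?t \<longleftrightarrow> (\<forall>c\<in>set_tree l. sylv2_ins c ?t = ?t) \<and>
      (\<forall>c\<in>set_tree r. sylv2_ins c ?t = ?t) \<and> sylv2_ins x ?t = ?t"
    unfolding absorbing_def by (auto simp del: sylv2_ins.simps)
  then show ?thesis
    using left right root by (cases "x \<in> set_tree l") (auto simp: absorbing_def simp del: sylv2_ins.simps)
qed

definition label_nodes :: "nat \<Rightarrow> 'a tree \<Rightarrow> 'a \<Rightarrow> (nat \<times> 'a tree) set" where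
  "label_nodes k t c = {(d, l). (d, c, l) \<in> nodes_d k t}"

definition deepest_leftless :: "(nat \<times> 'a tree) set \<Rightarrow> bool" where
  "deepest_leftless P \<longleftrightarrow> (\<forall>(d, l)\<in>P. d = Max (fst ` P) \<longrightarrow> l = Leaf)"

lemma label_nodes_Leaf [simp]: "label_nodes k Leaf c = {}"
  by (simp add: label_nodes_def)

lemma label_nodes_Node [simp]:
  "label_nodes k (Node l y r) c =
    (if c = y then {(k, l)} else {}) \<union> label_nodes (Suc k) l c \<union> label_nodes (Suc k) r c"
  by (auto simp: label_nodes_def)

lemma finite_label_nodes [simp]: "finite (label_nodes k t c)"
  by (induction t arbitrary: k) auto

lemma label_nodes_eq_empty_iff: "label_nodes k t c = {} \<longleftrightarrow> c \<notin> set_tree t"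
  by (induction t arbitrary: k) auto

lemma label_nodes_depth: "(d, l) \<in> label_nodes k t c \<Longrightarrow> k \<le> d"
proof (induction t arbitrary: k)
  case (Node t1 y t2)
  then show ?case by (auto split: if_splits dest: Suc_leD)
qed simp

lemma deepest_no_left_iff:
  "deepest_no_left t \<longleftrightarrow> (\<forall>c\<in>set_tree t. deepest_leftless (label_nodes 0 t c))"
proof -
  have "fst ` label_nodes 0 t c = {d. \<exists>l. (d, c, l) \<in> nodes_d 0 t}" for c
    by (force simp: label_nodes_def)
  then show ?thesis
    by (auto simp: deepest_no_left_def deepest_leftless_def label_nodes_def)
qed

lemma deepest_leftless_singleton: "deepest_leftless {(k, l)} \<longleftrightarrow> l = Leaf"
  by (simp add: deepest_leftless_def)

lemma deepest_leftless_insert_shallower: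
  assumes "finite P" and "P \<noteq> {}" and "\<forall>(d, _)\<in>P. k < d"
  shows "deepest_leftless (insert (k, l) P) \<longleftrightarrow> deepest_leftless P"
proof -
  have "Max (fst ` P) \<in> fst ` P" using assms by simp
  then have "k < Max (fst ` P)" using assms(3) by auto
  then have "Max (fst ` insert (k, l) P) = Max (fst ` P)"
    using assms by (simp add: max_def)
  with \<open>k < Max (fst ` P)\<close> show ?thesis
    by (simp add: deepest_leftless_def)
qed

lemma sylv2_ins_eq_self_iff_deepest_leftless:
  "is_bst t \<Longrightarrow> c \<in> set_tree t \<Longrightarrow> sylv2_ins c t = t \<longleftrightarrow> deepest_leftless (label_nodes k t c)"
proof (induction t arbitrary: k)
  case (Node l y r)
  consider "c < y" | "y < c" | "c = y" "c \<in> set_tree l" | "c = y" "c \<notin> set_tree l"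
    by fastforce
  then show ?case
  proof cases
    case 1
    then have "c \<in> set_tree l" "c \<notin> set_tree r" using Node.prems by auto
    then have "label_nodes (Suc k) r c = {}" by (simp add: label_nodes_eq_empty_iff)
    then show ?thesis using 1 Node \<open>c \<in> set_tree l\<close> by auto
  next
    case 2
    then have "c \<in> set_tree r" "c \<notin> set_tree l" using Node.prems by (auto dest: leD)
    then have "label_nodes (Suc k) l c = {}" by (simp add: label_nodes_eq_empty_iff)
    then show ?thesis using 2 Node \<open>c \<in> set_tree r\<close> by auto
  next
    case 3
    then have "label_nodes (Suc k) r c = {}"
      using Node.prems by (auto simp: label_nodes_eq_empty_iff)
    moreover have "deepest_leftless (insert (k, l) (label_nodes (Suc k) l c))
        \<longleftrightarrow> deepest_leftless (label_nodes (Suc k) l c)"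
      using 3 label_nodes_depth[of _ _ "Suc k" l c]
      by (intro deepest_leftless_insert_shallower) (auto simp: label_nodes_eq_empty_iff Suc_le_eq)
    ultimately show ?thesis using 3 Node by auto
  next
    case 4
    then have "label_nodes (Suc k) r c = {}" "label_nodes (Suc k) l c = {}"
      using Node.prems by (auto simp: label_nodes_eq_empty_iff)
    then show ?thesis using 4 sylv2_ins_notin[of c l] by (auto simp: deepest_leftless_singleton)
  qed
qed simp

lemma deepest_no_left_iff_absorbing: "is_bst t \<Longrightarrow> deepest_no_left t \<longleftrightarrow> absorbing t"
  unfolding deepest_no_left_iff absorbing_def
  using sylv2_ins_eq_self_iff_deepest_leftless by blast

fun idem_tree :: "'a::linorder tree \<Rightarrow> bool" where
  "idem_tree Leaf \<longleftrightarrow> True"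
| "idem_tree (Node l x r) \<longleftrightarrow> idem_tree l \<and> idem_tree r \<and>
    (\<forall>y\<in>set_tree l. y \<le> x) \<and> (\<forall>y\<in>set_tree r. x < y) \<and>
    (l = Leaf \<or> value l \<noteq> x \<and> x \<in> set_tree l)"

lemma idem_tree_iff: "idem_tree t \<longleftrightarrow> is_bst t \<and> two_reduced t \<and> absorbing t"
proof (induction t)
  case Leaf
  then show ?case by (simp add: absorbing_def)
next
  case (Node l x r)
  show ?case
  proof (cases "is_bst (Node l x r)")
    case True
    then show ?thesis
      using Node.IH absorbing_Node[OF True] by (cases l) auto
  qed (use Node in auto)
qed

lemma sylv2_idempotent_iff_idem_tree: "sylv2_cong (w @ w) w \<longleftrightarrow> idem_tree (sylv2_nf w)"
  by (simp add: sylv2_idempotent_iff_absorbing idem_tree_iff is_bst_sylv2_nf two_reduced_sylv2_nf)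

lemma idem_tree_sylv2_nf_reading: "idem_tree t \<Longrightarrow> sylv2_nf (reading t) = t"
  by (simp add: idem_tree_iff sylv2_nf_reading)

lemma sylv2_idempotent_iff_reading:
  "sylv2_cong (w @ w) w \<longleftrightarrow>
    (\<exists>t. is_bst t \<and> two_reduced t \<and> deepest_no_left t \<and> sylv2_cong w (reading t))"
proof -
  have "sylv2_cong (w @ w) w \<longleftrightarrow> (\<exists>t. idem_tree t \<and> sylv2_cong w (reading t))"
    by (metis sylv2_idempotent_iff_idem_tree sylv2_cong_iff_nf sylv2_cong_reading_sylv2_nf
        idem_tree_sylv2_nf_reading)
  then show ?thesis
    by (metis idem_tree_iff deepest_no_left_iff_absorbing)
qed

lemma sylv2_class_eq_iff: "sylv2_class w = sylv2_class v \<longleftrightarrow> sylv2_nf w = sylv2_nf v"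
  by (auto simp: sylv2_class_def sylv2_cong_iff_nf)

lemma bij_betw_idem_trees_sylv2_idempotents:
  "bij_betw (\<lambda>t. sylv2_class (reading t)) {t. idem_tree t} sylv2_idempotents"
proof (rule bij_betw_imageI)
  show "inj_on (\<lambda>t. sylv2_class (reading t)) {t. idem_tree t}"
    by (rule inj_onI) (simp add: sylv2_class_eq_iff idem_tree_sylv2_nf_reading)
  show "(\<lambda>t. sylv2_class (reading t)) ` {t. idem_tree t} = sylv2_idempotents"
  proof (intro equalityI subsetI)
    fix C assume "C \<in> (\<lambda>t. sylv2_class (reading t)) ` {t. idem_tree t}"
    then obtain t where "idem_tree t" and "C = sylv2_class (reading t)" by blast
    then show "C \<in> sylv2_idempotents"
      by (auto simp: sylv2_idempotents_def sylv2_idempotent_iff_idem_tree idem_tree_sylv2_nf_reading)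
  next
    fix C assume "C \<in> sylv2_idempotents"
    then obtain w where "C = sylv2_class w" and "idem_tree (sylv2_nf w)"
      by (auto simp: sylv2_idempotents_def sylv2_idempotent_iff_idem_tree)
    moreover have "sylv2_class w = sylv2_class (reading (sylv2_nf w))"
      by (simp add: sylv2_class_eq_iff sylv2_nf_reading is_bst_sylv2_nf two_reduced_sylv2_nf)
    ultimately show "C \<in> (\<lambda>t. sylv2_class (reading t)) ` {t. idem_tree t}" by blast
  qed
qed

section \<open>Catalan numbers\<close>

lemma Suc_times_binomial_central_Suc: "Suc k * ((2 * k) choose Suc k) = k * ((2 * k) choose k)"
proof (cases k)
  case (Suc m)
  then show ?thesis using Suc_times_binomial_add[of k m] by (simp add: mult_2 del: binomial_Suc_Suc)
qed simp

lemma Suc_dvd_binomial_central: "Suc k dvd ((2 * k) choose k)"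
proof -
  have "(2 * k) choose k = Suc k * ((2 * k) choose k) - k * ((2 * k) choose k)"
    by simp
  also have "\<dots> = Suc k * (((2 * k) choose k) - ((2 * k) choose Suc k))"
    by (simp only: diff_mult_distrib2 Suc_times_binomial_central_Suc)
  finally show ?thesis by (metis dvd_triv_left)
qed

lemma of_nat_catalan: "real (catalan k) = real ((2 * k) choose k) / (k + 1)"
  using Suc_dvd_binomial_central[of k] by (simp add: catalan_def real_of_nat_div)

lemma Suc_times_binomial_central_Suc_Suc:
  "Suc k * ((2 * Suc k) choose Suc k) = 2 * (2 * k + 1) * ((2 * k) choose k)"
proof -
  have "Suc k * ((2 * Suc k) choose Suc k) = 2 * Suc k * (Suc (2 * k) choose k)"
    using Suc_times_binomial[of k "Suc (2 * k)"] by simp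
  also have "Suc (2 * k) choose k = Suc (2 * k) choose Suc k"
    using central_binomial_odd[of "Suc (2 * k)"] by simp
  also have "2 * Suc k * (Suc (2 * k) choose Suc k) = 2 * (2 * k + 1) * ((2 * k) choose k)"
    using Suc_times_binomial[of k "2 * k"] by simp
  finally show ?thesis .
qed

lemma gbinomial_minus_half: "(-(1/2) gchoose k) * (-4) ^ k = real ((2 * k) choose k)"
proof (induction k)
  case (Suc k)
  have "(-(1/2) gchoose Suc k) * (-4) ^ Suc k * (k + 1)
        = (-4) ^ Suc k * ((-(1/2) gchoose Suc k) * (k + 1))"
    by (simp only: mult_ac)
  also have "(-(1/2) gchoose Suc k) * (k + 1) = (-(1/2) - k) * (-(1/2) gchoose k)"
    using gbinomial_mult_1[of "-(1/2) :: real" k] by (simp add: field_simps)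
  also have "(-4) ^ Suc k * ((-(1/2) - k) * (-(1/2) gchoose k))
        = 2 * (2 * k + 1) * ((-(1/2) gchoose k) * (-4) ^ k)"
    by (simp add: algebra_simps)
  also have "\<dots> = real ((2 * Suc k) choose Suc k) * (k + 1)"
    using Suc_times_binomial_central_Suc_Suc[of k] unfolding Suc
    by (simp add: algebra_simps del: binomial_Suc_Suc flip: of_nat_mult)
  finally have "(-(1/2) gchoose Suc k) * (-4) ^ Suc k * real (k + 1)
      = real ((2 * Suc k) choose Suc k) * real (k + 1)" .
  then show ?case by (subst (asm) mult_right_cancel) simp_all
qed simp

lemma gbinomial_half_Suc: "((1/2) gchoose Suc k) * (-4) ^ Suc k = -2 * real (catalan k)"
proof -
  have "((1/2) gchoose Suc k) * (-4) ^ Suc k * (k + 1)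
      = (-4) ^ Suc k * (((1/2) gchoose Suc k) * (k + 1))"
    by (simp only: mult_ac)
  also have "((1/2) gchoose Suc k) * (k + 1) = 1/2 * (-(1/2) gchoose k)"
    using gbinomial_absorption[of k "1/2 :: real"] by (simp add: field_simps)
  also have "(-4) ^ Suc k * (1/2 * (-(1/2) gchoose k)) = -2 * ((-(1/2) gchoose k) * (-4) ^ k)"
    by (simp add: algebra_simps)
  finally show ?thesis
    using gbinomial_minus_half[of k] by (simp add: of_nat_catalan field_simps)
qed

text \<open>The numbers \<open>b i\<close> below are the coefficients of \<open>\<surd>(1 - 4x)\<close>, whose square \<open>1 - 4x\<close> has
  no term of degree \<open>n + 2\<close>.\<close>

lemma catalan_Suc: "catalan (Suc n) = (\<Sum>i\<le>n. catalan i * catalan (n - i))"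
proof -
  define b :: "nat \<Rightarrow> real" where "b i = ((1/2) gchoose i) * (-4) ^ i" for i
  let ?N = "Suc (Suc n)"
  have b_0: "b 0 = 1"
    by (simp add: b_def)
  have b_Suc: "b (Suc i) = -2 * real (catalan i)" for i
    unfolding b_def by (rule gbinomial_half_Suc)
  have "(\<Sum>i\<le>?N. b i * b (?N - i)) = (\<Sum>i\<le>?N. ((1/2) gchoose i) * ((1/2) gchoose (?N - i))) * (-4) ^ ?N"
    unfolding sum_distrib_right
    by (rule sum.cong) (auto simp: b_def power_add[symmetric])
  also have "(\<Sum>i\<le>?N. ((1/2::real) gchoose i) * ((1/2) gchoose (?N - i))) = (1/2 + 1/2) gchoose ?N"
    using gbinomial_Vandermonde[of "1/2::real" "1/2" ?N] by (simp add: atMost_atLeast0)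
  also have "(1/2 + 1/2 :: real) gchoose ?N = 0"
    using binomial_gbinomial[of 1 ?N, where 'a = real] by simp
  finally have "(\<Sum>i\<le>?N. b i * b (?N - i)) = 0" by simp
  moreover have "(\<Sum>i\<le>?N. b i * b (?N - i))
      = b 0 * b ?N + ((\<Sum>i\<le>n. b (Suc i) * b (?N - Suc i)) + b ?N * b 0)"
    by (subst sum.atMost_Suc_shift) (simp only: sum.atMost_Suc diff_self_eq_0 diff_zero)
  moreover have "(\<Sum>i\<le>n. b (Suc i) * b (?N - Suc i)) = (\<Sum>i\<le>n. b (Suc i) * b (Suc (n - i)))"
    by (rule sum.cong) (auto simp: Suc_diff_le)
  ultimately have "real (catalan (Suc n)) = (\<Sum>i\<le>n. real (catalan i) * real (catalan (n - i)))"
    by (simp add: b_0 b_Suc del: sum.atMost_Suc flip: sum_distrib_left)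
  then show ?thesis by (simp flip: of_nat_mult of_nat_sum)
qed

section \<open>Large Schroeder numbers\<close>

lemma sum_binomial_times_binomial_diff:
  "(\<Sum>a\<le>m. (a choose p) * ((m - a) choose q)) = Suc m choose Suc (p + q)"
proof (induction m arbitrary: q)
  case 0
  then show ?case by (cases p; cases q) auto
next
  case (Suc m)
  show ?case
  proof (cases q)
    case 0
    then show ?thesis using sum_choose_upper[of p "Suc m"] by simp
  next
    case (Suc q')
    have "(\<Sum>a\<le>Suc m. (a choose p) * ((Suc m - a) choose q))
        = (\<Sum>a\<le>m. (a choose p) * ((Suc m - a) choose q))"
      using Suc by simp
    also have "\<dots> = (\<Sum>a\<le>m. (a choose p) * ((m - a) choose q'))
        + (\<Sum>a\<le>m. (a choose p) * ((m - a) choose q))"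
      unfolding sum.distrib[symmetric]
      by (rule sum.cong) (auto simp: Suc Suc_diff_le algebra_simps)
    also have "\<dots> = Suc (Suc m) choose Suc (p + q)"
      using Suc.IH Suc by simp
    finally show ?thesis .
  qed
qed

lemma sum_binomial_shifted_convolution:
  "(\<Sum>a\<le>m. ((a + i) choose (2 * i)) * ((m - a + k) choose (2 * k)))
    = (m + i + k + 1) choose (2 * i + 2 * k + 1)"
proof -
  let ?n = "m + i + k"
  let ?h = "\<lambda>a. (a choose (2 * i)) * ((?n - a) choose (2 * k))"
  have "(\<Sum>a\<le>?n. ?h a) = (\<Sum>a\<in>{i..i + m}. ?h a)"
  proof (rule sum.mono_neutral_right)
    show "\<forall>a\<in>{..?n} - {i..i + m}. ?h a = 0"
    proof
      fix a assume "a \<in> {..?n} - {i..i + m}"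
      then have "a < 2 * i \<or> ?n - a < 2 * k" by auto
      then show "?h a = 0" by auto
    qed
  qed auto
  also have "\<dots> = (\<Sum>a\<le>m. ?h (a + i))"
    using sum.shift_bounds_cl_nat_ivl[of ?h 0 i m] by (simp add: atMost_atLeast0 add.commute)
  also have "\<dots> = (\<Sum>a\<le>m. ((a + i) choose (2 * i)) * ((m - a + k) choose (2 * k)))"
    by (rule sum.cong) (auto simp: Suc_diff_le)
  finally show ?thesis
    using sum_binomial_times_binomial_diff[where m = ?n and p = "2 * i" and q = "2 * k"]
    by (simp del: binomial_Suc_Suc)
qed

lemma large_schroeder_eq_sum_atMost:
  assumes "a \<le> m"
  shows "large_schroeder a = (\<Sum>i\<le>m. ((a + i) choose (2 * i)) * catalan i)"
proof -
  have "large_schroeder a = (\<Sum>i\<le>a. ((a + i) choose (2 * i)) * catalan i)"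
    by (simp add: large_schroeder_def atMost_atLeast0)
  also have "\<dots> = (\<Sum>i\<le>m. ((a + i) choose (2 * i)) * catalan i)"
    using assms by (intro sum.mono_neutral_left) auto
  finally show ?thesis .
qed

lemma sum_large_schroeder_convolution_square:
  "(\<Sum>a\<le>m. large_schroeder a * large_schroeder (m - a))
    = (\<Sum>i\<le>m. \<Sum>k\<le>m. catalan i * catalan k * ((m + i + k + 1) choose (2 * i + 2 * k + 1)))"
proof -
  have "(\<Sum>a\<le>m. large_schroeder a * large_schroeder (m - a))
      = (\<Sum>a\<le>m. \<Sum>i\<le>m. \<Sum>k\<le>m.
          catalan i * catalan k * (((a + i) choose (2 * i)) * ((m - a + k) choose (2 * k))))"
  proof (rule sum.cong)
    fix a assume "a \<in> {..m}"
    then have "large_schroeder a * large_schroeder (m - a)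
        = (\<Sum>i\<le>m. ((a + i) choose (2 * i)) * catalan i) * (\<Sum>k\<le>m. ((m - a + k) choose (2 * k)) * catalan k)"
      using large_schroeder_eq_sum_atMost[of a m] large_schroeder_eq_sum_atMost[of "m - a" m] by simp
    then show "large_schroeder a * large_schroeder (m - a) = (\<Sum>i\<le>m. \<Sum>k\<le>m.
          catalan i * catalan k * (((a + i) choose (2 * i)) * ((m - a + k) choose (2 * k))))"
      by (simp add: sum_product mult_ac)
  qed simp
  also have "\<dots> = (\<Sum>i\<le>m. \<Sum>k\<le>m. \<Sum>a\<le>m.
          catalan i * catalan k * (((a + i) choose (2 * i)) * ((m - a + k) choose (2 * k))))"
    by (subst sum.swap) (rule sum.cong[OF HOL.refl], rule sum.swap)
  also have "\<dots> = (\<Sum>i\<le>m. \<Sum>k\<le>m. catalan i * catalan k * ((m + i + k + 1) choose (2 * i + 2 * k + 1)))"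
    using sum_binomial_shifted_convolution by (simp del: binomial_Suc_Suc flip: sum_distrib_left)
  finally show ?thesis .
qed

lemma sum_large_schroeder_convolution:
  "(\<Sum>a\<le>m. large_schroeder a * large_schroeder (m - a))
    = (\<Sum>j\<le>m. ((m + 1 + j) choose (2 * j + 1)) * catalan (Suc j))"
proof -
  define f where "f i k = catalan i * catalan k * ((m + i + k + 1) choose (2 * i + 2 * k + 1))" for i k
  have "(\<Sum>i\<le>m. \<Sum>k\<le>m. f i k) = (\<Sum>(i, k)\<in>{..m} \<times> {..m}. f i k)"
    by (simp add: sum.cartesian_product)
  also have "\<dots> = (\<Sum>(i, k)\<in>{(i, k). i + k \<le> m}. f i k)"
    by (rule sum.mono_neutral_right) (auto simp: f_def)
  also have "\<dots> = (\<Sum>j\<le>m. \<Sum>i\<le>j. f i (j - i))"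
    by (rule sum.triangle_reindex_eq)
  also have "\<dots> = (\<Sum>j\<le>m. ((m + 1 + j) choose (2 * j + 1)) * catalan (Suc j))"
  proof (rule sum.cong)
    fix j
    have "(\<Sum>i\<le>j. f i (j - i)) = (\<Sum>i\<le>j. catalan i * catalan (j - i)) * ((m + 1 + j) choose (2 * j + 1))"
      unfolding sum_distrib_right
      by (rule sum.cong) (simp_all add: f_def flip: add_mult_distrib2 del: binomial_Suc_Suc)
    then show "(\<Sum>i\<le>j. f i (j - i)) = ((m + 1 + j) choose (2 * j + 1)) * catalan (Suc j)"
      by (simp add: catalan_Suc del: binomial_Suc_Suc)
  qed simp
  finally show ?thesis
    unfolding sum_large_schroeder_convolution_square f_def .
qed

lemma large_schroeder_Suc_eq:
  "large_schroeder (Suc m)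
    = large_schroeder m + (\<Sum>j\<le>m. ((m + 1 + j) choose (2 * j + 1)) * catalan (Suc j))"
proof -
  have "large_schroeder (Suc m) = (\<Sum>k\<le>Suc m. ((Suc m + k) choose (2 * k)) * catalan k)"
    by (rule large_schroeder_eq_sum_atMost) simp
  also have "\<dots> = 1 + (\<Sum>j\<le>m. ((Suc m + Suc j) choose (2 * Suc j)) * catalan (Suc j))"
    by (subst sum.atMost_Suc_shift) (simp add: catalan_def)
  also have "\<dots> = 1 + (\<Sum>j\<le>m. ((m + Suc j) choose (2 * Suc j)) * catalan (Suc j))
      + (\<Sum>j\<le>m. ((m + 1 + j) choose (2 * j + 1)) * catalan (Suc j))"
  proof -
    have "(Suc m + Suc j) choose (2 * Suc j)
        = ((m + 1 + j) choose (2 * j + 1)) + ((m + Suc j) choose (2 * Suc j))" for j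
      using binomial_Suc_Suc[of "m + 1 + j" "2 * j + 1"] by simp
    then show ?thesis by (simp add: sum.distrib algebra_simps del: binomial_Suc_Suc)
  qed
  also have "1 + (\<Sum>j\<le>m. ((m + Suc j) choose (2 * Suc j)) * catalan (Suc j)) = large_schroeder m"
    unfolding large_schroeder_eq_sum_atMost[of m "Suc m", OF le_SucI[OF order.refl]]
    by (subst sum.atMost_Suc_shift) (simp add: catalan_def)
  finally show ?thesis .
qed

lemma large_schroeder_Suc:
  "large_schroeder (Suc m) = large_schroeder m + (\<Sum>a\<le>m. large_schroeder a * large_schroeder (m - a))"
  by (simp only: large_schroeder_Suc_eq sum_large_schroeder_convolution)

lemma shifted_schroeder_Suc_Suc:
  "shifted_schroeder (Suc (Suc m)) = shifted_schroeder (Suc m)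
    + (\<Sum>i\<in>{1..Suc m}. shifted_schroeder i * shifted_schroeder (Suc (Suc m) - i))"
proof -
  have "(\<Sum>i\<in>{1..Suc m}. shifted_schroeder i * shifted_schroeder (Suc (Suc m) - i))
      = (\<Sum>a\<le>m. shifted_schroeder (Suc a) * shifted_schroeder (Suc (Suc m) - Suc a))"
    by (simp only: One_nat_def sum.shift_bounds_cl_Suc_ivl atMost_atLeast0)
  also have "\<dots> = (\<Sum>a\<le>m. large_schroeder a * large_schroeder (m - a))"
    by (rule sum.cong) (auto simp: shifted_schroeder_def Suc_diff_le)
  finally show ?thesis
    by (simp add: shifted_schroeder_def large_schroeder_Suc)
qed

lemma sum_shifted_schroeder_convolution:
  assumes "2 \<le> k"
  shows "(\<Sum>i\<in>{1..<k}. (shifted_schroeder i + (if i = 1 then 1 else 0)) * shifted_schroeder (k - i))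
    = shifted_schroeder k"
proof -
  obtain m where k: "k = Suc (Suc m)"
    using assms by (metis add_2_eq_Suc le_Suc_ex)
  have "{1..<k} = {1..Suc m}"
    using k by auto
  then have "(\<Sum>i\<in>{1..<k}. (shifted_schroeder i + (if i = 1 then 1 else 0)) * shifted_schroeder (k - i))
      = (\<Sum>i\<in>{1..Suc m}. shifted_schroeder i * shifted_schroeder (k - i))
        + (\<Sum>i\<in>{1..Suc m}. if i = 1 then shifted_schroeder (k - i) else 0)"
    unfolding sum.distrib[symmetric] by (intro sum.cong) auto
  also have "(\<Sum>i\<in>{1..Suc m}. if i = 1 then shifted_schroeder (k - i) else 0) = shifted_schroeder (Suc m)"
    using k by (simp add: sum.delta)
  finally show ?thesis
    using k by (simp add: shifted_schroeder_Suc_Suc)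
qed

lemma card_atMost_inter_add_greaterThan_inter:
  fixes X :: "'a::linorder set"
  assumes "finite X"
  shows "card (X \<inter> {..x}) + card (X \<inter> {x<..}) = card X"
proof -
  have "X = (X \<inter> {..x}) \<union> (X \<inter> {x<..})" and "(X \<inter> {..x}) \<inter> (X \<inter> {x<..}) = {}"
    by auto
  then show ?thesis
    using assms by (metis card_Un_disjoint finite_Int)
qed

lemma atMost_greaterThan_inter_psubset:
  fixes X :: "'a::linorder set"
  assumes "finite X" "x \<in> X - {Max X}"
  shows "X \<inter> {..x} \<subset> X" and "X \<inter> {x<..} \<subset> X"
proof -
  have "Max X \<in> X"
    using assms by (intro Max_in) auto
  moreover have "x < Max X"
    using assms by (simp add: order.not_eq_order_implies_strict)
  ultimately have "Max X \<in> X - X \<inter> {..x}" "x \<in> X - X \<inter> {x<..}"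
    using assms by auto
  then show "X \<inter> {..x} \<subset> X" "X \<inter> {x<..} \<subset> X"
    by blast+
qed

lemma bij_betw_card_atMost_inter:
  fixes X :: "'a::linorder set"
  assumes "finite X"
  shows "bij_betw (\<lambda>x. card (X \<inter> {..x})) X {1..card X}"
proof -
  let ?f = "\<lambda>x. card (X \<inter> {..x})"
  have "?f x < ?f y" if "y \<in> X" "x < y" for x y
  proof (rule psubset_card_mono)
    have "X \<inter> {..x} \<subseteq> X \<inter> {..y}" "y \<in> X \<inter> {..y} - X \<inter> {..x}"
      using that by auto
    then show "X \<inter> {..x} \<subset> X \<inter> {..y}"
      by blast
  qed (use assms in simp)
  then have "inj_on ?f X"
    by (metis linorder_inj_onI' order_less_irrefl)
  moreover have "?f ` X \<subseteq> {1..card X}"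
    using assms by (auto simp: Suc_le_eq card_gt_0_iff intro: card_mono)
  ultimately show ?thesis
    using assms by (simp add: bij_betw_def card_subset_eq card_image)
qed

lemma sum_card_atMost_inter_remove_Max:
  fixes X :: "'a::linorder set"
  assumes "finite X" "X \<noteq> {}"
  shows "(\<Sum>x\<in>X - {Max X}. g (card (X \<inter> {..x}))) = (\<Sum>i\<in>{1..<card X}. g i)"
proof -
  have "X \<inter> {..Max X} = X"
    using assms by auto
  then have "bij_betw (\<lambda>x. card (X \<inter> {..x})) {Max X} {card X}"
    by simp
  then have "bij_betw (\<lambda>x. card (X \<inter> {..x})) (X - {Max X}) ({1..card X} - {card X})"
    using assms by (intro bij_betw_DiffI bij_betw_card_atMost_inter) (auto simp: Suc_le_eq card_gt_0_iff)
  also have "{1..card X} - {card X} = {1..<card X}"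
    by auto
  finally show ?thesis
    by (rule sum.reindex_bij_betw)
qed

section \<open>Counting idempotent trees\<close>

definition idem_trees :: "'a::linorder set \<Rightarrow> 'a tree set" where
  "idem_trees X = {t. idem_tree t \<and> set_tree t = X}"

text \<open>The possible left subtrees of an idempotent tree with root \<open>x\<close> whose labels up to \<open>x\<close>
  form \<open>Z\<close>.\<close>

definition left_trees :: "'a::linorder \<Rightarrow> 'a set \<Rightarrow> 'a tree set" where
  "left_trees x Z = {l. idem_tree l \<and> insert x (set_tree l) = Z \<and>
    (l = Leaf \<or> value l \<noteq> x \<and> x \<in> set_tree l)}"

lemma value_in_set_tree: "x \<in> set_tree t \<Longrightarrow> value t \<in> set_tree t"
  by (cases t) auto

lemma idem_trees_empty: "idem_trees {} = {Leaf}"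
  by (auto simp: idem_trees_def)

lemma idem_trees_singleton: "idem_trees {x} = {Node Leaf x Leaf}"
proof -
  have "t = Node Leaf x Leaf" if "idem_tree t" "set_tree t = {x}" for t
  proof (cases t)
    case (Node l y r)
    then have "y = x" "set_tree l \<subseteq> {x}" "set_tree r = {}"
      using that by fastforce+
    moreover have "l = Leaf"
      using that Node calculation by (cases l) auto
    ultimately show ?thesis using Node by auto
  qed (use that in auto)
  then show ?thesis by (auto simp: idem_trees_def)
qed

lemma left_trees_singleton: "left_trees x {x} = {Leaf}"
proof -
  have "l = Leaf" if "insert x (set_tree l) = {x}" "l = Leaf \<or> value l \<noteq> x \<and> x \<in> set_tree l" for l
    using that by (cases l) auto
  then show ?thesis by (auto simp: left_trees_def)
qed

lemma idem_trees_root_in: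
  assumes "A \<subseteq> X"
  shows "{t \<in> idem_trees X. t \<noteq> Leaf \<and> value t \<in> A}
    = (\<Union>x\<in>A. (\<lambda>(l, r). Node l x r) ` (left_trees x (X \<inter> {..x}) \<times> idem_trees (X \<inter> {x<..})))"
    (is "?lhs = ?rhs")
proof
  show "?lhs \<subseteq> ?rhs"
  proof
    fix t assume "t \<in> ?lhs"
    then obtain l x r where t: "t = Node l x r" "x \<in> A" "idem_tree t" "set_tree t = X"
      by (cases t) (auto simp: idem_trees_def)
    then have "set_tree r = X \<inter> {x<..}" and "insert x (set_tree l) = X \<inter> {..x}"
      by (auto dest: leD)
    then have "l \<in> left_trees x (X \<inter> {..x})" and "r \<in> idem_trees (X \<inter> {x<..})"
      using t by (simp_all add: left_trees_def idem_trees_def)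
    then show "t \<in> ?rhs"
      using t by (intro UN_I[of x] image_eqI[where x = "(l, r)"]) auto
  qed
next
  show "?rhs \<subseteq> ?lhs"
  proof
    fix t assume "t \<in> ?rhs"
    then obtain x l r where t: "t = Node l x r" "x \<in> A"
      and l: "l \<in> left_trees x (X \<inter> {..x})" and r: "r \<in> idem_trees (X \<inter> {x<..})"
      by auto
    from l have l_set: "insert x (set_tree l) = X \<inter> {..x}"
      and l_idem: "idem_tree l" "l = Leaf \<or> value l \<noteq> x \<and> x \<in> set_tree l"
      by (simp_all add: left_trees_def)
    from r have r_set: "set_tree r = X \<inter> {x<..}" and r_idem: "idem_tree r"
      by (simp_all add: idem_trees_def)
    have "set_tree t = insert x (set_tree l) \<union> set_tree r"
      using t by auto
    also have "\<dots> = X"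
      unfolding l_set r_set by auto
    finally have "set_tree t = X" .
    moreover have "\<forall>y\<in>set_tree l. y \<le> x"
      using l_set by blast
    then have "idem_tree t"
      using t l_idem r_idem r_set by simp
    ultimately show "t \<in> ?lhs"
      using t by (simp add: idem_trees_def)
  qed
qed

lemma finite_card_idem_trees_root_in:
  assumes "finite A" "A \<subseteq> X"
    and "\<And>x. x \<in> A \<Longrightarrow> finite (left_trees x (X \<inter> {..x})) \<and> finite (idem_trees (X \<inter> {x<..}))"
  shows "finite {t \<in> idem_trees X. t \<noteq> Leaf \<and> value t \<in> A}"
    and "card {t \<in> idem_trees X. t \<noteq> Leaf \<and> value t \<in> A}
      = (\<Sum>x\<in>A. card (left_trees x (X \<inter> {..x})) * card (idem_trees (X \<inter> {x<..})))"
proof -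
  have inj: "inj_on (\<lambda>(l, r). Node l x r) B" for x and B :: "('a tree \<times> 'a tree) set"
    by (rule inj_onI) auto
  show "finite {t \<in> idem_trees X. t \<noteq> Leaf \<and> value t \<in> A}"
    unfolding idem_trees_root_in[OF assms(2)] using assms by auto
  have "card {t \<in> idem_trees X. t \<noteq> Leaf \<and> value t \<in> A}
      = (\<Sum>x\<in>A. card ((\<lambda>(l, r). Node l x r) ` (left_trees x (X \<inter> {..x}) \<times> idem_trees (X \<inter> {x<..}))))"
    unfolding idem_trees_root_in[OF assms(2)] using assms by (intro card_UN_disjoint) auto
  then show "card {t \<in> idem_trees X. t \<noteq> Leaf \<and> value t \<in> A}
      = (\<Sum>x\<in>A. card (left_trees x (X \<inter> {..x})) * card (idem_trees (X \<inter> {x<..})))"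
    by (simp add: card_image[OF inj] card_cartesian_product)
qed

lemma idem_trees_eq_root_in: "X \<noteq> {} \<Longrightarrow> idem_trees X = {t \<in> idem_trees X. t \<noteq> Leaf \<and> value t \<in> X}"
  by (auto simp: idem_trees_def value_in_set_tree)

lemma left_trees_eq_root_in:
  assumes "x \<in> Z" "\<forall>z\<in>Z. z \<le> x" "Z \<noteq> {x}"
  shows "left_trees x Z = {t \<in> idem_trees Z. t \<noteq> Leaf \<and> value t \<in> Z - {x}}"
  using assms by (auto simp: left_trees_def idem_trees_def value_in_set_tree)

lemma idem_trees_root_Max:
  assumes "x \<in> Z" "\<forall>z\<in>Z. z \<le> x"
  shows "{t \<in> idem_trees Z. t \<noteq> Leaf \<and> value t \<in> {x}} = (\<lambda>l. Node l x Leaf) ` left_trees x Z"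
proof -
  have "Z \<inter> {..x} = Z" "Z \<inter> {x<..} = {}"
    using assms by (auto dest: leD)
  then show ?thesis
    using idem_trees_root_in[of "{x}" Z] assms by (auto simp: idem_trees_empty)
qed

lemma idem_trees_eq_left_trees_Un:
  assumes "x \<in> Z" "\<forall>z\<in>Z. z \<le> x" "Z \<noteq> {x}"
  shows "idem_trees Z = left_trees x Z \<union> (\<lambda>l. Node l x Leaf) ` left_trees x Z"
proof -
  have "idem_trees Z = {t \<in> idem_trees Z. t \<noteq> Leaf \<and> value t \<in> Z}"
    using assms(1) by (intro idem_trees_eq_root_in) auto
  also have "\<dots> = {t \<in> idem_trees Z. t \<noteq> Leaf \<and> value t \<in> Z - {x}}
      \<union> {t \<in> idem_trees Z. t \<noteq> Leaf \<and> value t \<in> {x}}"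
    using assms(1) by auto
  also have "\<dots> = left_trees x Z \<union> (\<lambda>l. Node l x Leaf) ` left_trees x Z"
    using left_trees_eq_root_in[OF assms] idem_trees_root_Max[OF assms(1,2)] by simp
  finally show ?thesis .
qed

lemma finite_card_idem_trees_Max:
  assumes "x \<in> Z" "\<forall>z\<in>Z. z \<le> x" "Z \<noteq> {x}" "finite (left_trees x Z)"
  shows "finite (idem_trees Z)" and "card (idem_trees Z) = 2 * card (left_trees x Z)"
proof -
  have "Node l x Leaf \<notin> left_trees x Z" for l
    by (simp add: left_trees_def)
  then have disjoint: "left_trees x Z \<inter> (\<lambda>l. Node l x Leaf) ` left_trees x Z = {}"
    by blast
  show "finite (idem_trees Z)"
    using idem_trees_eq_left_trees_Un[OF assms(1-3)] assms(4) by simp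
  show "card (idem_trees Z) = 2 * card (left_trees x Z)"
    unfolding idem_trees_eq_left_trees_Un[OF assms(1-3)]
    using assms(4) disjoint by (simp add: card_Un_disjoint card_image inj_on_def)
qed

text \<open>The correction term counts the empty left subtree, possible only for \<open>Z = {x}\<close>.\<close>

lemma finite_card_left_trees:
  assumes "finite Z" "x \<in> Z" "\<forall>z\<in>Z. z \<le> x"
    and "finite (idem_trees Z)" "card (idem_trees Z) = shifted_schroeder (card Z)"
  shows "finite (left_trees x Z) \<and>
    2 * card (left_trees x Z) = shifted_schroeder (card Z) + (if card Z = 1 then 1 else 0)"
proof (cases "Z = {x}")
  case True
  then show ?thesis
    by (simp add: left_trees_singleton shifted_schroeder_def large_schroeder_def catalan_def)
next
  case False
  then have "card Z \<noteq> 1"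
    using assms(2) by (auto simp: card_Suc_eq)
  moreover have "finite (left_trees x Z)"
    using idem_trees_eq_left_trees_Un[OF assms(2,3) False] assms(4) by (metis finite_Un)
  ultimately show ?thesis
    using finite_card_idem_trees_Max(2)[OF assms(2,3) False] assms(5) by simp
qed

lemma finite_card_idem_trees_by_roots:
  fixes X :: "'a::linorder set"
  assumes "finite X" "2 \<le> card X"
    and "\<And>x. x \<in> X - {Max X} \<Longrightarrow>
      finite (left_trees x (X \<inter> {..x})) \<and> finite (idem_trees (X \<inter> {x<..}))"
  shows "finite (idem_trees X)"
    and "card (idem_trees X) = (\<Sum>x\<in>X - {Max X}.
      2 * card (left_trees x (X \<inter> {..x})) * card (idem_trees (X \<inter> {x<..})))"
proof -
  let ?m = "Max X"
  have "X \<noteq> {}" "X \<noteq> {x}" for x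
    using assms(2) by auto
  then have m: "?m \<in> X" "\<forall>z\<in>X. z \<le> ?m" "X \<noteq> {?m}"
    using assms(1) by auto
  have "finite (X - {?m})" "X - {?m} \<subseteq> X"
    using assms(1) by auto
  note roots = finite_card_idem_trees_root_in[OF this assms(3)]
  have left: "left_trees ?m X = {t \<in> idem_trees X. t \<noteq> Leaf \<and> value t \<in> X - {?m}}"
    using m by (rule left_trees_eq_root_in)
  show "finite (idem_trees X)"
    using finite_card_idem_trees_Max(1)[OF m] roots(1) left by simp
  show "card (idem_trees X) = (\<Sum>x\<in>X - {?m}.
      2 * card (left_trees x (X \<inter> {..x})) * card (idem_trees (X \<inter> {x<..})))"
    using finite_card_idem_trees_Max(2)[OF m] roots left by (simp add: sum_distrib_left mult.assoc)
qed

lemma finite_card_idem_trees_step: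
  fixes X :: "'a::linorder set"
  assumes "finite X" "2 \<le> card X"
    and IH: "\<And>Y. Y \<subset> X \<Longrightarrow> finite (idem_trees Y) \<and> card (idem_trees Y) = shifted_schroeder (card Y)"
  shows "finite (idem_trees X) \<and> card (idem_trees X) = shifted_schroeder (card X)"
proof -
  let ?g = "\<lambda>i. (shifted_schroeder i + (if i = 1 then 1 else 0)) * shifted_schroeder (card X - i)"
  have left: "finite (left_trees x (X \<inter> {..x})) \<and>
      2 * card (left_trees x (X \<inter> {..x}))
        = shifted_schroeder (card (X \<inter> {..x})) + (if card (X \<inter> {..x}) = 1 then 1 else 0)"
    if "x \<in> X - {Max X}" for x
    using IH[OF atMost_greaterThan_inter_psubset(1)[OF assms(1) that]] that assms(1)
    by (intro finite_card_left_trees) auto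
  have right: "finite (idem_trees (X \<inter> {x<..})) \<and>
      card (idem_trees (X \<inter> {x<..})) = shifted_schroeder (card X - card (X \<inter> {..x}))"
    if "x \<in> X - {Max X}" for x
    using IH[OF atMost_greaterThan_inter_psubset(2)[OF assms(1) that]]
      card_atMost_inter_add_greaterThan_inter[OF assms(1), of x]
    by (metis add_diff_cancel_left')
  have "finite (left_trees x (X \<inter> {..x})) \<and> finite (idem_trees (X \<inter> {x<..}))"
    if "x \<in> X - {Max X}" for x
    using left[OF that] right[OF that] by blast
  note by_roots = finite_card_idem_trees_by_roots[OF assms(1,2) this]
  have "card (idem_trees X) = (\<Sum>x\<in>X - {Max X}.
      2 * card (left_trees x (X \<inter> {..x})) * card (idem_trees (X \<inter> {x<..})))"
    by (rule by_roots(2))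
  also have "\<dots> = (\<Sum>x\<in>X - {Max X}. ?g (card (X \<inter> {..x})))"
    using left right by (intro sum.cong) simp_all
  also have "\<dots> = shifted_schroeder (card X)"
    using assms(1,2) sum_shifted_schroeder_convolution
    by (subst sum_card_atMost_inter_remove_Max) auto
  finally show ?thesis
    using by_roots(1) left right by blast
qed

theorem finite_card_idem_trees:
  fixes X :: "'a::linorder set"
  assumes "finite X"
  shows "finite (idem_trees X) \<and> card (idem_trees X) = shifted_schroeder (card X)"
  using assms
proof (induction "card X" arbitrary: X rule: less_induct)
  case less
  consider "card X = 0" | "card X = 1" | "2 \<le> card X" by linarith
  then show ?case
  proof cases
    case 1
    then show ?thesis using less.prems by (simp add: idem_trees_empty shifted_schroeder_def)
  next
    case 2
    then obtain x where "X = {x}" by (rule card_1_singletonE)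
    then show ?thesis
      by (simp add: idem_trees_singleton shifted_schroeder_def large_schroeder_def catalan_def)
  next
    case 3
    show ?thesis
    proof (rule finite_card_idem_trees_step[OF less.prems 3])
      fix Y assume "Y \<subset> X"
      then have "card Y < card X" "finite Y"
        using less.prems by (auto intro: psubset_card_mono finite_subset)
      then show "finite (idem_trees Y) \<and> card (idem_trees Y) = shifted_schroeder (card Y)"
        using less.hyps by blast
    qed
  qed
qed

lemma sum_Pow_card:
  fixes g :: "nat \<Rightarrow> 'b::comm_semiring_1"
  assumes "finite A"
  shows "(\<Sum>X\<in>Pow A. g (card X)) = (\<Sum>k=0..card A. of_nat (card A choose k) * g k)"
proof -
  let ?S = "\<lambda>k. {X. X \<subseteq> A \<and> card X = k}"
  have "Pow A = (\<Union>k\<in>{0..card A}. ?S k)"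
    using assms by (auto intro: card_mono)
  then have "(\<Sum>X\<in>Pow A. g (card X)) = (\<Sum>k=0..card A. \<Sum>X\<in>?S k. g (card X))"
    by (simp only:) (rule sum.UNION_disjoint, use assms in auto)
  also have "\<dots> = (\<Sum>k=0..card A. of_nat (card A choose k) * g k)"
  proof (rule sum.cong)
    fix k
    have "(\<Sum>X\<in>?S k. g (card X)) = (\<Sum>X\<in>?S k. g k)"
      by (rule sum.cong) simp_all
    then show "(\<Sum>X\<in>?S k. g (card X)) = of_nat (card A choose k) * g k"
      by (simp add: n_subsets[OF assms])
  qed simp
  finally show ?thesis .
qed

lemma card_idem_trees_UNIV:
  "card {t :: 'a::{linorder, finite} tree. idem_tree t}
    = (\<Sum>k=0..card (UNIV :: 'a set). (card (UNIV :: 'a set) choose k) * shifted_schroeder k)"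
proof -
  have idem: "finite (idem_trees X) \<and> card (idem_trees X) = shifted_schroeder (card X)"
    for X :: "'a set"
    by (rule finite_card_idem_trees) simp
  have "{t :: 'a tree. idem_tree t} = (\<Union>X\<in>Pow UNIV. idem_trees X)"
    by (auto simp: idem_trees_def)
  also have "card \<dots> = (\<Sum>X\<in>Pow (UNIV :: 'a set). card (idem_trees X))"
    by (rule card_UN_disjoint) (use idem in \<open>auto simp: idem_trees_def\<close>)
  also have "\<dots> = (\<Sum>X\<in>Pow (UNIV :: 'a set). shifted_schroeder (card X))"
    using idem by simp
  also have "\<dots> = (\<Sum>k=0..card (UNIV :: 'a set). (card (UNIV :: 'a set) choose k) * shifted_schroeder k)"
    by (simp only: sum_Pow_card[OF finite] of_nat_id)
  finally show ?thesis .
qed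

theorem mainTheorem7:
  fixes n :: nat
  assumes "n = card (UNIV :: ('a::{linorder, finite}) set)"
  shows "card (sylv2_idempotents :: 'a list set set)
           = (\<Sum>k=0..n. (n choose k) * shifted_schroeder k)
       \<and> (\<forall>w :: 'a list. sylv2_cong (w @ w) w \<longleftrightarrow>
           (\<exists>T :: 'a tree. is_bst T \<and> two_reduced T \<and> deepest_no_left T
                \<and> sylv2_cong w (reading T)))"
proof
  have "card (sylv2_idempotents :: 'a list set set) = card {t :: 'a tree. idem_tree t}"
    using bij_betw_idem_trees_sylv2_idempotents by (rule bij_betw_same_card[symmetric])
  then show "card (sylv2_idempotents :: 'a list set set) = (\<Sum>k=0..n. (n choose k) * shifted_schroeder k)"
    using assms by (simp add: card_idem_trees_UNIV)
qed (use sylv2_idempotent_iff_reading in blast)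


end
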